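(* Let $0<r_i<r_j$, let $g(\theta)=\dfrac{r_ir_j\sin\theta}{(r_i^2+r_j^2-2r_ir_j\cos\theta)^{3/2}}$, and let $\theta_{ij}\in(0,\pi)$ be defined by \[\cos\theta_{ij}=\frac{-r_i^2-r_j^2+\sqrt{r_i^4+14r_i^2r_j^2+r_j^4}}{2r_ir_j}\in(0,1).\] Then for $\theta\in[0,\pi]$: if $\cos\theta\in(\cos\theta_{ij},1)$ then \[ g'(\theta)< g'(0)\,\frac{\cos\theta-\cos\theta_{ij}}{1-\cos\theta_{ij}},\] and if $\cos\theta\in(-1,\cos\theta_{ij})$ then \[ g'(\theta)< g'(\pi)\,\frac{\cos\theta-\cos\theta_{ij}}{-1-\cos\theta_{ij}}.\] *)

theory Defs
  imports "HOL-Analysis.Analysis"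
begin

definition g_fun :: "real \<Rightarrow> real \<Rightarrow> real \<Rightarrow> real" where
  "g_fun ri rj \<theta> = ri * rj * sin \<theta> / (ri\<^sup>2 + rj\<^sup>2 - 2 * ri * rj * cos \<theta>) powr (3/2)"

definition theta_crit :: "real \<Rightarrow> real \<Rightarrow> real" where
  "theta_crit ri rj = arccos ((- ri\<^sup>2 - rj\<^sup>2 + sqrt (ri^4 + 14 * ri\<^sup>2 * rj\<^sup>2 + rj^4)) / (2 * ri * rj))"

end

theory Submission
  imports Defs
begin

text \<open>
  Writing \<open>a, b\<close> for \<open>r\<^sub>i, r\<^sub>j\<close>, differentiating gives \<open>g'(\<theta>) = h(cos \<theta>)\<close> with \<open>h(c) = a b P(c) / D(c)^(5/2)\<close>, where
  \<open>D(c) = a\<^sup>2 + b\<^sup>2 - 2 a b c > 0\<close> and \<open>P(c) = a b c\<^sup>2 + (a\<^sup>2 + b\<^sup>2) c - 3 a b\<close>.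
  The quadratic \<open>P\<close> has the roots \<open>c\<^sub>0 = cos \<theta>\<^sub>i\<^sub>j \<in> (0,1)\<close> and \<open>c' < -1\<close>, so
  \<open>h(c) = (c - c\<^sub>0) q(c)\<close> with \<open>q(c) = (a b)\<^sup>2 (c - c') / D(c)^(5/2)\<close> strictly increasing
  on \<open>[-1,1]\<close>: the numerator grows and \<open>D\<close> shrinks. Hence on either side of \<open>c\<^sub>0\<close>,
  \<open>h\<close> lies strictly below the chord joining \<open>(c\<^sub>0, 0)\<close> to the endpoint \<open>(\<plusminus>1, h(\<plusminus>1))\<close>.
\<close>

lemma powr_three_halves:
  fixes x :: real
  assumes "0 \<le> x"
  shows "x powr (3/2) = x * sqrt x"
proof -
  have "x powr (3/2) = x powr (1 + 1/2)" by simp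
  also have "\<dots> = x * sqrt x" unfolding powr_add using assms by (simp add: powr_half_sqrt)
  finally show ?thesis .
qed

lemma law_of_cosines_pos:
  fixes a b c :: real
  assumes "0 < a" "0 < b" "a \<noteq> b" "c \<le> 1"
  shows "0 < a\<^sup>2 + b\<^sup>2 - 2 * a * b * c"
proof -
  have "a * b * c \<le> a * b" using assms by (simp add: mult_left_le)
  moreover have "0 < (a - b)\<^sup>2" using assms by simp
  ultimately show ?thesis by (simp add: power2_diff algebra_simps)
qed

definition g_deriv_cos :: "real \<Rightarrow> real \<Rightarrow> real \<Rightarrow> real" where
  "g_deriv_cos a b c = a * b * (a * b * c\<^sup>2 + (a\<^sup>2 + b\<^sup>2) * c - 3 * a * b)
     / ((a\<^sup>2 + b\<^sup>2 - 2 * a * b * c)\<^sup>2 * sqrt (a\<^sup>2 + b\<^sup>2 - 2 * a * b * c))"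

lemma has_real_derivative_g_fun:
  fixes a b t :: real
  assumes "0 < a" "0 < b" "a \<noteq> b"
  shows "(g_fun a b has_real_derivative g_deriv_cos a b (cos t)) (at t)"
proof -
  define D where "D x = a\<^sup>2 + b\<^sup>2 - 2 * a * b * cos x" for x
  have D_pos: "0 < D x" for x
    unfolding D_def using assms by (intro law_of_cosines_pos) auto
  have g: "g_fun a b = (\<lambda>x. a * b * sin x / (D x * sqrt (D x)))"
    using D_pos by (simp add: fun_eq_iff g_fun_def D_def powr_three_halves less_imp_le)
  define S where "S = sqrt (D t)"
  have S: "0 < S" "D t = S\<^sup>2" using D_pos[of t] by (simp_all add: S_def)
  have "(g_fun a b has_real_derivative
      (a * b * cos t * (D t * S) - a * b * sin t * (2 * a * b * sin t * S + D t * (a * b * sin t) / S))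
        / (D t * S)\<^sup>2) (at t)"
    unfolding g D_def S_def
    by (rule DERIV_cong, (auto intro!: derivative_eq_intros)[1])
      (use D_pos[of t] in \<open>auto simp: D_def field_simps power2_eq_square\<close>)
  moreover have "a * b * sin t * (2 * a * b * sin t * S + D t * (a * b * sin t) / S)
      = 3 * (a * b)\<^sup>2 * (1 - (cos t)\<^sup>2) * S"
  proof -
    have "a * b * sin t * (2 * a * b * sin t * S + D t * (a * b * sin t) / S)
        = 3 * (a * b)\<^sup>2 * (sin t)\<^sup>2 * S"
      using S by (simp add: field_simps power2_eq_square)
    then show ?thesis by (simp add: sin_squared_eq)
  qed
  moreover have "(a * b * cos t * (D t * S) - 3 * (a * b)\<^sup>2 * (1 - (cos t)\<^sup>2) * S) / (D t * S)\<^sup>2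
      = g_deriv_cos a b (cos t)"
    unfolding g_deriv_cos_def D_def[symmetric] S_def[symmetric]
    using S by (simp add: field_simps D_def power2_eq_square)
  ultimately show ?thesis by simp
qed

lemma deriv_g_fun:
  fixes a b t :: real
  assumes "0 < a" "0 < b" "a \<noteq> b"
  shows "deriv (g_fun a b) t = g_deriv_cos a b (cos t)"
  using has_real_derivative_g_fun[OF assms] by (rule DERIV_imp_deriv)

definition crit_cos :: "real \<Rightarrow> real \<Rightarrow> real" where
  "crit_cos a b = (- a\<^sup>2 - b\<^sup>2 + sqrt (a^4 + 14 * a\<^sup>2 * b\<^sup>2 + b^4)) / (2 * a * b)"

lemma crit_cos_sqrt_sq: "sqrt (a^4 + 14 * a\<^sup>2 * b\<^sup>2 + b^4) ^ 2 = a^4 + 14 * a\<^sup>2 * b\<^sup>2 + (b::real)^4"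
  by (simp add: add_nonneg_nonneg)

lemma crit_cos_pos:
  fixes a b :: real
  assumes "0 < a" "0 < b"
  shows "0 < crit_cos a b"
proof -
  define s where "s = sqrt (a^4 + 14 * a\<^sup>2 * b\<^sup>2 + b^4)"
  have "(a\<^sup>2 + b\<^sup>2)\<^sup>2 < s\<^sup>2"
    using assms crit_cos_sqrt_sq[of a b] unfolding s_def by (simp add: power2_sum power_mult_distrib)
  then have "a\<^sup>2 + b\<^sup>2 < s" by (rule power2_less_imp_less) (simp add: s_def)
  then show ?thesis unfolding crit_cos_def s_def[symmetric] using assms by simp
qed

lemma crit_cos_less_one:
  fixes a b :: real
  assumes "0 < a" "0 < b" "a \<noteq> b"
  shows "crit_cos a b < 1"
proof -
  define s where "s = sqrt (a^4 + 14 * a\<^sup>2 * b\<^sup>2 + b^4)"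
  have "((a + b)\<^sup>2)\<^sup>2 - s\<^sup>2 = 4 * (a * b) * (a - b)\<^sup>2"
    using crit_cos_sqrt_sq[of a b] unfolding s_def by algebra
  moreover have "0 < 4 * (a * b) * (a - b)\<^sup>2" using assms by simp
  ultimately have "s < (a + b)\<^sup>2" using power2_less_imp_less[of s "(a + b)\<^sup>2"] by simp
  then show ?thesis unfolding crit_cos_def s_def[symmetric] using assms
    by (simp add: divide_less_eq power2_eq_square algebra_simps)
qed

lemma crit_cos_root:
  fixes a b :: real
  assumes "0 < a" "0 < b"
  shows "a * b * (crit_cos a b)\<^sup>2 + (a\<^sup>2 + b\<^sup>2) * crit_cos a b - 3 * a * b = 0"
proof -
  define s where "s = sqrt (a^4 + 14 * a\<^sup>2 * b\<^sup>2 + b^4)"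
  have "2 * a * b * crit_cos a b = s - a\<^sup>2 - b\<^sup>2"
    unfolding crit_cos_def s_def[symmetric] using assms by simp
  then have "4 * (a * b) * (a * b * (crit_cos a b)\<^sup>2 + (a\<^sup>2 + b\<^sup>2) * crit_cos a b - 3 * a * b) = 0"
    using crit_cos_sqrt_sq[of a b] unfolding s_def by algebra
  then show ?thesis using assms by simp
qed

lemma cos_theta_crit:
  fixes a b :: real
  assumes "0 < a" "0 < b" "a \<noteq> b"
  shows "cos (theta_crit a b) = crit_cos a b"
  unfolding theta_crit_def crit_cos_def[symmetric]
  using crit_cos_pos[OF assms(1,2)] crit_cos_less_one[OF assms] by (intro cos_arccos) auto

text \<open>\<open>c'\<close> is the other root, by Vieta's formula for the sum of the roots.\<close>

lemma quadratic_factor_crit_cos: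
  fixes a b c :: real
  assumes "0 < a" "0 < b"
  defines "c' \<equiv> - (a\<^sup>2 + b\<^sup>2) / (a * b) - crit_cos a b"
  shows "a * b * c\<^sup>2 + (a\<^sup>2 + b\<^sup>2) * c - 3 * a * b = a * b * ((c - crit_cos a b) * (c - c'))"
    and "c' < -1"
proof -
  have "a * b * ((c - crit_cos a b) * (c - c'))
      = a * b * c\<^sup>2 + (a\<^sup>2 + b\<^sup>2) * c - (a * b * (crit_cos a b)\<^sup>2 + (a\<^sup>2 + b\<^sup>2) * crit_cos a b)"
    unfolding c'_def using assms(1,2) by (simp add: field_simps power2_eq_square)
  then show "a * b * c\<^sup>2 + (a\<^sup>2 + b\<^sup>2) * c - 3 * a * b = a * b * ((c - crit_cos a b) * (c - c'))"
    using crit_cos_root[OF assms(1,2)] by simp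
  have "2 * (a * b) \<le> a\<^sup>2 + b\<^sup>2" using sum_squares_bound[of a b] by (simp add: algebra_simps)
  then have "2 \<le> (a\<^sup>2 + b\<^sup>2) / (a * b)" using assms(1,2) by (simp add: le_divide_eq)
  then show "c' < -1"
    unfolding c'_def minus_divide_left[symmetric] using crit_cos_pos[OF assms(1,2)] by linarith
qed

lemma strict_mono_on_div_law_of_cosines:
  fixes a b k c' :: real
  assumes "0 < a" "0 < b" "a \<noteq> b" "0 < k" "c' < -1"
  shows "strict_mono_on {-1..1}
    (\<lambda>c. k * (c - c') / ((a\<^sup>2 + b\<^sup>2 - 2 * a * b * c)\<^sup>2 * sqrt (a\<^sup>2 + b\<^sup>2 - 2 * a * b * c)))"
proof (rule strict_mono_onI)
  define E where "E c = (a\<^sup>2 + b\<^sup>2 - 2 * a * b * c)\<^sup>2 * sqrt (a\<^sup>2 + b\<^sup>2 - 2 * a * b * c)" for c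
  fix x y :: real
  assume xy: "x \<in> {-1..1}" "y \<in> {-1..1}" "x < y"
  have Dy: "0 < a\<^sup>2 + b\<^sup>2 - 2 * a * b * y" using xy assms by (intro law_of_cosines_pos) auto
  have "a\<^sup>2 + b\<^sup>2 - 2 * a * b * y < a\<^sup>2 + b\<^sup>2 - 2 * a * b * x"
    using xy assms by (simp add: mult_strict_left_mono)
  then have "E y < E x" "0 < E y" unfolding E_def using Dy
    by (auto intro!: mult_strict_mono power_strict_mono)
  moreover have "0 < k * (x - c')" "k * (x - c') < k * (y - c')" using xy assms by auto
  ultimately show "k * (x - c') / E x < k * (y - c') / E y" by (intro frac_less2) auto
qed

lemma below_chords_of_increasing_factor:
  fixes h q :: "real \<Rightarrow> real" and lo hi c0 c :: real
  assumes h: "\<And>c. h c = (c - c0) * q c" and q: "strict_mono_on {lo..hi} q"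
    and "lo < c0" "c0 < hi"
  shows "c0 < c \<Longrightarrow> c < hi \<Longrightarrow> h c < h hi * ((c - c0) / (hi - c0))"
    and "lo < c \<Longrightarrow> c < c0 \<Longrightarrow> h c < h lo * ((c - c0) / (lo - c0))"
proof -
  assume c: "c0 < c" "c < hi"
  then have "q c < q hi" using assms by (intro strict_mono_onD[OF q]) auto
  then have "(c - c0) * q c < (c - c0) * q hi" using c by simp
  also have "\<dots> = h hi * ((c - c0) / (hi - c0))" using assms(4) by (simp add: h field_simps)
  finally show "h c < h hi * ((c - c0) / (hi - c0))" by (simp add: h)
next
  assume c: "lo < c" "c < c0"
  then have "q lo < q c" using assms by (intro strict_mono_onD[OF q]) auto
  then have "(c - c0) * q c < (c - c0) * q lo" using c by (simp add: mult_less_cancel_left)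
  also have "\<dots> = h lo * ((c - c0) / (lo - c0))" using assms(3) by (simp add: h field_simps)
  finally show "h c < h lo * ((c - c0) / (lo - c0))" by (simp add: h)
qed

theorem lemma2p4:
  fixes ri rj \<theta> :: real
  assumes "0 < ri" and "ri < rj" and "0 \<le> \<theta>" and "\<theta> \<le> pi"
  shows "(cos \<theta> \<in> {cos (theta_crit ri rj)<..<1} \<longrightarrow>
           deriv (g_fun ri rj) \<theta> < deriv (g_fun ri rj) 0 *
             ((cos \<theta> - cos (theta_crit ri rj)) / (1 - cos (theta_crit ri rj))))
       \<and> (cos \<theta> \<in> {-1<..<cos (theta_crit ri rj)} \<longrightarrow>
           deriv (g_fun ri rj) \<theta> < deriv (g_fun ri rj) pi *
             ((cos \<theta> - cos (theta_crit ri rj)) / (-1 - cos (theta_crit ri rj))))"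
proof -
  have r: "0 < ri" "0 < rj" "ri \<noteq> rj" using assms by auto
  define c' where "c' = - (ri\<^sup>2 + rj\<^sup>2) / (ri * rj) - crit_cos ri rj"
  define q where "q c = (ri * rj)\<^sup>2 * (c - c')
      / ((ri\<^sup>2 + rj\<^sup>2 - 2 * ri * rj * c)\<^sup>2 * sqrt (ri\<^sup>2 + rj\<^sup>2 - 2 * ri * rj * c))" for c
  note quadratic = quadratic_factor_crit_cos[OF r(1,2), folded c'_def]
  have factor: "g_deriv_cos ri rj c = (c - crit_cos ri rj) * q c" for c
    unfolding q_def g_deriv_cos_def quadratic(1) by (simp add: power2_eq_square)
  have mono: "strict_mono_on {-1..1} q"
    unfolding q_def using r quadratic(2) by (intro strict_mono_on_div_law_of_cosines) auto
  note chords = below_chords_of_increasing_factor[OF factor mono _ crit_cos_less_one[OF r]]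
  show ?thesis
    unfolding deriv_g_fun[OF r] cos_theta_crit[OF r]
    using chords crit_cos_pos[OF r(1,2)] by auto
qed

end
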